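(* Let $\Gamma=\mathsf{PSL}_2(\mathbb{Z})=\langle U,S\mid U^3,S^2\rangle$, with $U$ of order $3$ and $S$ of order $2$. Let $\mathcal{W}$ be the set of nonempty words in the alphabet $\{U,S\}$ that are equal to the identity in $\Gamma$ and contain no factor $SS$. Below, $B$ denotes an arbitrary nonempty word over $\{U,S\}$, and for $n,m\ge 0$ each function counts the words in $\mathcal{W}$ having exactly $n$ letters $U$ and $m$ letters $S$ and having the indicated form: - $a(n,m)$: words of the form $SUBUS$; - $b(n,m)$: words of the form $U^\alpha SBSU^\beta$ with $\alpha,\beta>0$, $\alpha+\beta\equiv0\pmod 3$, or of the form $U^\gamma$ with $\gamma>0$, $\gamma\equiv 0\pmod 3$; - $c(n,m)$: words of the form $U^\alpha SBS$ or $SBSU^\alpha$ with $\alpha>0$, $\alpha\equiv0\pmod3$; - $d(n,m)$: words of the form $U^\alpha SBSU^\beta$ with $\alpha,\beta>0$, $\alpha+\beta\equiv 2\pmod 3$; - $e(n,m)$: words of the form $U^\alpha SBSU^\beta$ with $\alpha,\beta>0$, $\alpha+\beta\equiv1\pmod3$; - $f(n,m)$: words of the form $SBSU^\alpha$ or $U^\alpha SBS$ with $\alpha\equiv1\pmod3$; - $g(n,m)$: words of the form $SBSU^\alpha$ or $U^\alpha SBS$ with $\alpha\equiv2\pmod3$; - $\mathfrak d(n,m)$: words of the form $USBSU$; - $\mathfrak f(n,m)$: words of the form $SBSU$. All these functions are taken to be $0$ if an argument is negative. Then for all $n,m\ge0$: $$a(3n,2m)=b(3n,2m-2)+d(3n,2m-2)+e(3n,2m-2),$$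 $$b(3n,2m)=\sum_{k\ge1}(3k-1)\,a(3n-3k,2m)\ \text{ for } m\ge1,\qquad b(3n,0)=1\ \text{ for } n>0,$$ $$c(3n,2m)=2\sum_{k\ge1}a(3n-3k,2m),$$ $$d(3n,2m)=\sum_{k\ge0}(3k+1)\,\mathfrak d(3n-3k,2m),$$ $$e(3n,2m)=\sum_{k\ge1}3k\,\mathfrak f(3n-3k,2m),$$ $$f(3n,2m)=2\sum_{k\ge0}\mathfrak f(3n-3k,2m),$$ $$g(3n,2m)=2\sum_{k\ge0}\mathfrak d(3n-3k,2m).$$
   Context: Words are finite sequences over $\{U,S\}$ read as products in $\Gamma$; exponents $U^\alpha$ denote $\alpha$ consecutive letters $U$. *)

theory Defs
  imports Main
begin

datatype letter = U | S

text \<open>An element of SL_2(Z) is represented by its entries (a,b,c,d)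
  for the matrix [[a,b],[c,d]]; a word is trivial in PSL_2(Z) iff its matrix is +I or -I.
  Generators: S = [[0,-1],[1,0]] (order 2 in PSL_2(Z)), U = S T = [[0,-1],[1,1]] (order 3),
  the standard generators realising PSL_2(Z) = < U, S | U^3, S^2 >.\<close>

type_synonym mat2 = "int \<times> int \<times> int \<times> int"

fun mmul :: "mat2 \<Rightarrow> mat2 \<Rightarrow> mat2" where
  "mmul (a,b,c,d) (e,f,g,h) = (a*e + b*g, a*f + b*h, c*e + d*g, c*f + d*h)"

definition mat_id :: mat2 where "mat_id = (1,0,0,1)"

fun letter_mat :: "letter \<Rightarrow> mat2" where
  "letter_mat U = (0,-1,1,1)"
| "letter_mat S = (0,-1,1,0)"

definition word_mat :: "letter list \<Rightarrow> mat2" where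
  "word_mat w = foldr (\<lambda>l M. mmul (letter_mat l) M) w mat_id"

definition trivial_in_Gamma :: "letter list \<Rightarrow> bool" where
  "trivial_in_Gamma w \<longleftrightarrow> word_mat w = (1,0,0,1) \<or> word_mat w = (-1,0,0,-1)"

definition Uexp :: "nat \<Rightarrow> letter list" where "Uexp k = replicate k U"

definition Wset :: "letter list set" where
  "Wset = {w. w \<noteq> [] \<and> trivial_in_Gamma w \<and> \<not> (\<exists>xs ys. w = xs @ [S,S] @ ys)}"

definition cnt :: "(letter list \<Rightarrow> bool) \<Rightarrow> int \<Rightarrow> int \<Rightarrow> nat" where
  "cnt P n m = (if n < 0 \<or> m < 0 then 0 else
     card {w \<in> Wset. int (count_list w U) = n \<and> int (count_list w S) = m \<and> P w})"

definition form_a :: "letter list \<Rightarrow> bool" where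
  "form_a w \<longleftrightarrow> (\<exists>B. B \<noteq> [] \<and> w = [S,U] @ B @ [U,S])"

definition form_b :: "letter list \<Rightarrow> bool" where
  "form_b w \<longleftrightarrow>
     (\<exists>B \<alpha> \<beta>. B \<noteq> [] \<and> \<alpha> > 0 \<and> \<beta> > 0 \<and> (\<alpha> + \<beta>) mod 3 = 0 \<and>
        w = Uexp \<alpha> @ [S] @ B @ [S] @ Uexp \<beta>)
   \<or> (\<exists>\<gamma>. \<gamma> > 0 \<and> \<gamma> mod 3 = 0 \<and> w = Uexp \<gamma>)"

definition form_c :: "letter list \<Rightarrow> bool" where
  "form_c w \<longleftrightarrow> (\<exists>B \<alpha>. B \<noteq> [] \<and> \<alpha> > 0 \<and> \<alpha> mod 3 = 0 \<and>
     (w = Uexp \<alpha> @ [S] @ B @ [S] \<or> w = [S] @ B @ [S] @ Uexp \<alpha>))"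

definition form_d :: "letter list \<Rightarrow> bool" where
  "form_d w \<longleftrightarrow> (\<exists>B \<alpha> \<beta>. B \<noteq> [] \<and> \<alpha> > 0 \<and> \<beta> > 0 \<and> (\<alpha> + \<beta>) mod 3 = 2 \<and>
        w = Uexp \<alpha> @ [S] @ B @ [S] @ Uexp \<beta>)"

definition form_e :: "letter list \<Rightarrow> bool" where
  "form_e w \<longleftrightarrow> (\<exists>B \<alpha> \<beta>. B \<noteq> [] \<and> \<alpha> > 0 \<and> \<beta> > 0 \<and> (\<alpha> + \<beta>) mod 3 = 1 \<and>
        w = Uexp \<alpha> @ [S] @ B @ [S] @ Uexp \<beta>)"

definition form_f :: "letter list \<Rightarrow> bool" where
  "form_f w \<longleftrightarrow> (\<exists>B \<alpha>. B \<noteq> [] \<and> \<alpha> mod 3 = 1 \<and>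
     (w = [S] @ B @ [S] @ Uexp \<alpha> \<or> w = Uexp \<alpha> @ [S] @ B @ [S]))"

definition form_g :: "letter list \<Rightarrow> bool" where
  "form_g w \<longleftrightarrow> (\<exists>B \<alpha>. B \<noteq> [] \<and> \<alpha> mod 3 = 2 \<and>
     (w = [S] @ B @ [S] @ Uexp \<alpha> \<or> w = Uexp \<alpha> @ [S] @ B @ [S]))"

definition form_dfrak :: "letter list \<Rightarrow> bool" where
  "form_dfrak w \<longleftrightarrow> (\<exists>B. B \<noteq> [] \<and> w = [U,S] @ B @ [S,U])"

definition form_ffrak :: "letter list \<Rightarrow> bool" where
  "form_ffrak w \<longleftrightarrow> (\<exists>B. B \<noteq> [] \<and> w = [S] @ B @ [S,U])"

definition ca :: "int \<Rightarrow> int \<Rightarrow> nat" where "ca = cnt form_a"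
definition cb :: "int \<Rightarrow> int \<Rightarrow> nat" where "cb = cnt form_b"
definition cc :: "int \<Rightarrow> int \<Rightarrow> nat" where "cc = cnt form_c"
definition cd :: "int \<Rightarrow> int \<Rightarrow> nat" where "cd = cnt form_d"
definition ce :: "int \<Rightarrow> int \<Rightarrow> nat" where "ce = cnt form_e"
definition cf :: "int \<Rightarrow> int \<Rightarrow> nat" where "cf = cnt form_f"
definition cg :: "int \<Rightarrow> int \<Rightarrow> nat" where "cg = cnt form_g"
definition cdfrak :: "int \<Rightarrow> int \<Rightarrow> nat" where "cdfrak = cnt form_dfrak"
definition cffrak :: "int \<Rightarrow> int \<Rightarrow> nat" where "cffrak = cnt form_ffrak"

end

theory Submission
  imports Defs
begin

text \<open>
  A word of \<open>\<W>\<close> containing the letter \<open>S\<close> factors uniquely as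
  \<open>U\<^sup>a S B S U\<^sup>b\<close>. Triviality in \<open>\<Gamma>\<close> is invariant under cyclic
  rotation, and \<open>U\<^sup>3 = -I\<close> is central, so this word is trivial iff
  \<open>S B S U\<^sup>t\<close> is, where \<open>t = (a + b) mod 3\<close>; the absence of a factor \<open>SS\<close>
  depends on \<open>S B S\<close> alone. Hence the words of a shape given by a set of admissible
  exponent pairs \<open>(a, b)\<close> are counted by a sum over these pairs of a number that depends
  only on \<open>a + b\<close>, and each recurrence reduces to counting the admissible pairs with a
  given sum. The recurrence for \<open>a\<close> strips the outer letters instead: \<open>S v S\<close> lies
  in \<open>\<W>\<close> iff \<open>v\<close> does, and a word \<open>v = U\<dots>U\<close> of \<open>\<W>\<close> has shape
  \<open>b\<close>, \<open>d\<close> or \<open>e\<close> according to the residue of \<open>a + b\<close>.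
\<close>

section \<open>Words without a factor \<open>SS\<close>\<close>

fun no_SS :: "letter list \<Rightarrow> bool" where
  "no_SS (x # y # w) \<longleftrightarrow> \<not> (x = S \<and> y = S) \<and> no_SS (y # w)"
| "no_SS _ \<longleftrightarrow> True"

lemma no_SS_iff: "no_SS w \<longleftrightarrow> \<not> (\<exists>xs ys. w = xs @ [S,S] @ ys)"
proof (induction w rule: no_SS.induct)
  case (1 x y w)
  have "(\<exists>xs ys. x # y # w = xs @ [S,S] @ ys) \<longleftrightarrow> x = S \<and> y = S \<or> (\<exists>xs ys. y # w = xs @ [S,S] @ ys)"
    by (auto simp: Cons_eq_append_conv)
  then show ?case using 1 by simp
qed (auto simp: Cons_eq_append_conv)

lemma Wset_iff: "w \<in> Wset \<longleftrightarrow> w \<noteq> [] \<and> trivial_in_Gamma w \<and> no_SS w"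
  by (simp add: Wset_def no_SS_iff)

lemma no_SS_Cons_U [simp]: "no_SS (U # w) = no_SS w"
  by (cases w) auto

lemma no_SS_append_U: "no_SS (xs @ U # ys) \<longleftrightarrow> no_SS xs \<and> no_SS ys"
proof (induction xs rule: no_SS.induct)
  case ("2_2" x)
  then show ?case by (cases x) simp_all
qed auto

lemma Uexp_0 [simp]: "Uexp 0 = []"
  by (simp add: Uexp_def)

lemma count_list_Uexp [simp]: "count_list (Uexp a) U = a" "count_list (Uexp a) S = 0"
  by (induction a) (simp_all add: Uexp_def)

lemma Uexp_add: "Uexp (a + b) = Uexp a @ Uexp b"
  by (simp add: Uexp_def replicate_add)

lemma S_notin_Uexp [simp]: "S \<notin> set (Uexp a)"
  by (simp add: Uexp_def)

lemma no_SS_Uexp_append [simp]: "no_SS (Uexp a @ w) = no_SS w"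
  by (induction a) (simp_all add: Uexp_def)

lemma no_SS_append_Uexp [simp]: "no_SS (w @ Uexp a) = no_SS w"
proof (induction a)
  case (Suc a)
  then show ?case
    using no_SS_append_U[of "w @ Uexp a" "[]"]
    by (simp add: Uexp_def replicate_append_same[symmetric])
qed (simp add: Uexp_def)

lemma no_SS_S_block:
  "no_SS (S # B @ [S]) \<longleftrightarrow> B \<noteq> [] \<and> hd B = U \<and> last B = U \<and> no_SS B"
proof (cases B rule: rev_cases)
  case (snoc C y)
  show ?thesis
  proof (cases y)
    case U
    show ?thesis
    proof (cases C)
      case (Cons a D)
      then show ?thesis using snoc U by (cases a) (simp_all add: no_SS_append_U)
    qed (simp add: snoc U)
  next
    case S
    then show ?thesis using snoc by (simp add: no_SS_iff) (metis append_Cons append_Nil)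
  qed
qed simp

lemma length_eq_count_list_U_S: "length w = count_list w U + count_list w S"
proof (induction w)
  case (Cons l w)
  then show ?case by (cases l) simp_all
qed simp

lemma eq_Uexp_length: "S \<notin> set w \<Longrightarrow> w = Uexp (length w)"
proof -
  assume "S \<notin> set w"
  then have "\<forall>y\<in>set w. y = U"
    using letter.exhaust by blast
  then show ?thesis
    by (simp add: Uexp_def replicate_length_same)
qed

lemma finite_count_list_U_S: "finite {w. count_list w U = n \<and> count_list w S = m}"
proof (rule finite_subset)
  show "{w. count_list w U = n \<and> count_list w S = m} \<subseteq> {w. set w \<subseteq> {U, S} \<and> length w = n + m}"
    by (auto simp: length_eq_count_list_U_S intro: letter.exhaust)
qed (rule finite_lists_length_eq, simp)


section \<open>Triviality in \<open>PSL\<^sub>2(\<int>)\<close>\<close>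

lemma mmul_assoc: "mmul (mmul A B) C = mmul A (mmul B C)"
  by (cases A; cases B; cases C) (simp add: algebra_simps)

lemma mmul_mat_id [simp]: "mmul mat_id A = A"
  by (cases A) (simp add: mat_id_def)

lemma word_mat_Nil [simp]: "word_mat [] = mat_id"
  by (simp add: word_mat_def)

lemma word_mat_Cons [simp]: "word_mat (l # w) = mmul (letter_mat l) (word_mat w)"
  by (simp add: word_mat_def)

lemma word_mat_append: "word_mat (xs @ ys) = mmul (word_mat xs) (word_mat ys)"
  by (induction xs) (simp_all add: mmul_assoc)

fun mdet :: "mat2 \<Rightarrow> int" where
  "mdet (a, b, c, d) = a * d - b * c"

lemma mdet_word_mat: "mdet (word_mat w) = 1"
proof (induction w)
  case (Cons l w)
  then show ?case by (cases l; cases "word_mat w") (simp_all add: algebra_simps)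
qed (simp add: mat_id_def)

lemma mmul_eq_scalar_commute:
  assumes "mdet A = 1" and "mmul A B = (e, 0, 0, e)"
  shows "mmul B A = (e, 0, 0, e)"
proof -
  \<comment> \<open>the hypotheses force \<open>B\<close> to be \<open>e\<close> times the adjugate of \<open>A\<close>\<close>
  obtain a b c d p q r s where "A = (a, b, c, d)" "B = (p, q, r, s)"
    by (metis prod_cases4)
  with assms have "a * d - b * c = 1" "a * p + b * r = e" "a * q + b * s = 0"
    "c * p + d * r = 0" "c * q + d * s = e"
    by simp_all
  then have "p * a + q * c = e" "p * b + q * d = 0" "r * a + s * c = 0" "r * b + s * d = e"
    by algebra+
  then show ?thesis
    using \<open>A = _\<close> \<open>B = _\<close> by simp
qed

lemma trivial_in_Gamma_iff: "trivial_in_Gamma w \<longleftrightarrow> (\<exists>e. e\<^sup>2 = 1 \<and> word_mat w = (e, 0, 0, e))"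
  by (auto simp: trivial_in_Gamma_def power2_eq_1_iff)

lemma trivial_in_Gamma_rotate: "trivial_in_Gamma (xs @ ys) \<longleftrightarrow> trivial_in_Gamma (ys @ xs)"
  using mmul_eq_scalar_commute[OF mdet_word_mat]
  unfolding trivial_in_Gamma_iff word_mat_append by metis

lemma trivial_in_Gamma_append_scalar:
  assumes "word_mat z = (e, 0, 0, e)" and "e\<^sup>2 = 1"
  shows "trivial_in_Gamma (w @ z) \<longleftrightarrow> trivial_in_Gamma w"
  using assms
  by (cases "word_mat w") (auto simp: trivial_in_Gamma_def word_mat_append power2_eq_1_iff)

lemma trivial_in_Gamma_append_U3: "trivial_in_Gamma (w @ Uexp (3 * k)) \<longleftrightarrow> trivial_in_Gamma w"
proof (induction k)
  case (Suc k)
  have "Uexp (3 * Suc k) = Uexp (3 * k) @ [U, U, U]"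
    using Uexp_add[of "3 * k" 3] by (simp add: Uexp_def numeral_3_eq_3)
  moreover have "word_mat [U, U, U] = (-1, 0, 0, -1)"
    by (simp add: mat_id_def)
  ultimately show ?case
    using Suc trivial_in_Gamma_append_scalar[of "[U, U, U]" "-1" "w @ Uexp (3 * k)"] by simp
qed (simp add: Uexp_def)

lemma trivial_in_Gamma_U_conj:
  "trivial_in_Gamma (Uexp a @ w @ Uexp b) \<longleftrightarrow> trivial_in_Gamma (w @ Uexp ((a + b) mod 3))"
proof -
  have "w @ Uexp b @ Uexp a = (w @ Uexp ((a + b) mod 3)) @ Uexp (3 * ((a + b) div 3))"
    by (simp flip: Uexp_add add: add.commute[of a b])
  then show ?thesis
    using trivial_in_Gamma_rotate[of "Uexp a" "w @ Uexp b"]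
      trivial_in_Gamma_append_U3[of "w @ Uexp ((a + b) mod 3)"] by simp
qed

lemma trivial_in_Gamma_S_conj: "trivial_in_Gamma (S # w @ [S]) \<longleftrightarrow> trivial_in_Gamma w"
proof -
  have "word_mat [S, S] = (-1, 0, 0, -1)"
    by (simp add: mat_id_def)
  then show ?thesis
    using trivial_in_Gamma_rotate[of "[S]" "w @ [S]"]
      trivial_in_Gamma_append_scalar[of "[S, S]" "-1" w]
    by simp
qed


section \<open>Counting words by blocks \<open>U\<^sup>a S B S U\<^sup>b\<close>\<close>

definition block :: "nat \<Rightarrow> letter list \<Rightarrow> nat \<Rightarrow> letter list" where
  "block a B b = Uexp a @ [S] @ B @ [S] @ Uexp b"

definition block_form :: "(nat \<times> nat) set \<Rightarrow> letter list \<Rightarrow> bool" where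
  "block_form I w \<longleftrightarrow> (\<exists>a b B. (a, b) \<in> I \<and> B \<noteq> [] \<and> w = block a B b)"

definition W_words :: "(letter list \<Rightarrow> bool) \<Rightarrow> nat \<Rightarrow> nat \<Rightarrow> letter list set" where
  "W_words P n m = {w \<in> Wset. count_list w U = n \<and> count_list w S = m \<and> P w}"

definition core_words :: "nat \<Rightarrow> nat \<Rightarrow> nat \<Rightarrow> letter list set" where
  "core_words t n m = {B. no_SS (S # B @ [S]) \<and> trivial_in_Gamma (S # B @ S # Uexp t)
     \<and> count_list B U = n \<and> count_list B S + 2 = m}"

lemma Uexp_S_Cons_inj: "Uexp a @ S # x = Uexp a' @ S # x' \<Longrightarrow> a = a' \<and> x = x'"
proof (induction a arbitrary: a')
  case 0
  then show ?case by (cases a') (simp_all add: Uexp_def)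
next
  case (Suc a)
  then show ?case by (cases a') (simp_all add: Uexp_def)
qed

lemma block_inj: "block a B b = block a' B' b' \<Longrightarrow> a = a' \<and> B = B' \<and> b = b'"
proof -
  assume "block a B b = block a' B' b'"
  then have "Uexp a @ S # (B @ S # Uexp b) = Uexp a' @ S # (B' @ S # Uexp b')"
    by (simp add: block_def)
  then have a: "a = a'" and B: "B @ S # Uexp b = B' @ S # Uexp b'"
    by (auto dest: Uexp_S_Cons_inj)
  from B have "rev (B @ S # Uexp b) = rev (B' @ S # Uexp b')"
    by (rule arg_cong)
  then have "Uexp b @ S # rev B = Uexp b' @ S # rev B'"
    by (simp add: Uexp_def)
  with a show ?thesis
    by (auto dest: Uexp_S_Cons_inj)
qed

lemma block_form_block: "block_form I (block a B b) \<longleftrightarrow> (a, b) \<in> I \<and> B \<noteq> []"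
  unfolding block_form_def using block_inj by blast

lemma block_form_disjoint: "block_form I w \<Longrightarrow> block_form J w \<Longrightarrow> block_form (I \<inter> J) w"
  unfolding block_form_def using block_inj by blast

lemma block_form_Un: "block_form (I \<union> J) w \<longleftrightarrow> block_form I w \<or> block_form J w"
  unfolding block_form_def by blast

lemma S_in_set_if_block_form: "block_form I w \<Longrightarrow> S \<in> set w"
  by (auto simp: block_form_def block_def)

lemma block_in_W_words:
  "block a B b \<in> W_words P N M \<longleftrightarrow>
     P (block a B b) \<and> a + b \<le> N \<and> B \<in> core_words ((a + b) mod 3) (N - (a + b)) M"
proof -
  have "trivial_in_Gamma (block a B b) \<longleftrightarrow> trivial_in_Gamma (S # B @ S # Uexp ((a + b) mod 3))"
    using trivial_in_Gamma_U_conj[of a "S # B @ [S]" b] by (simp add: block_def)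
  moreover have "no_SS (block a B b) \<longleftrightarrow> no_SS (S # B @ [S])"
    using no_SS_append_Uexp[of "S # B @ [S]" b] by (simp add: block_def)
  moreover have "count_list (block a B b) U = count_list B U + (a + b)"
    "count_list (block a B b) S = count_list B S + 2"
    by (simp_all add: block_def)
  ultimately show ?thesis
    by (auto simp: W_words_def core_words_def Wset_iff block_def)
qed

lemma finite_core_words: "finite (core_words t n m)"
  by (rule finite_subset[OF _ finite_count_list_U_S[of n "m - 2"]]) (auto simp: core_words_def)

lemma finite_W_words: "finite (W_words P n m)"
  by (rule finite_subset[OF _ finite_count_list_U_S[of n m]]) (auto simp: W_words_def)

lemma card_block_words_pairs:
  "card (W_words (block_form I) N M) =
     (\<Sum>p\<in>{p \<in> I. fst p + snd p \<le> N}.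
        card (core_words ((fst p + snd p) mod 3) (N - (fst p + snd p)) M))"
proof -
  let ?I = "{p \<in> I. fst p + snd p \<le> N}"
  let ?C = "\<lambda>p. core_words ((fst p + snd p) mod 3) (N - (fst p + snd p)) M"
  let ?f = "\<lambda>(p, B). block (fst p) B (snd p)"
  have "W_words (block_form I) N M = ?f ` (SIGMA p:?I. ?C p)"
  proof (intro equalityI subsetI)
    fix w
    assume w: "w \<in> W_words (block_form I) N M"
    then obtain a b B where "(a, b) \<in> I" "w = block a B b"
      by (auto simp: W_words_def block_form_def)
    with w show "w \<in> ?f ` (SIGMA p:?I. ?C p)"
      by (force simp: block_in_W_words)
  next
    fix w
    assume "w \<in> ?f ` (SIGMA p:?I. ?C p)"
    then show "w \<in> W_words (block_form I) N M"
      by (auto simp: block_in_W_words block_form_block core_words_def no_SS_S_block)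
  qed
  moreover have "inj_on ?f (SIGMA p:?I. ?C p)"
    by (rule inj_onI) (auto dest: block_inj)
  moreover have "finite ?I"
    by (rule finite_subset[of _ "{..N} \<times> {..N}"]) auto
  ultimately show ?thesis
    by (simp add: card_image finite_core_words)
qed

lemma card_block_words:
  "card (W_words (block_form I) N M) =
     (\<Sum>s\<le>N. card {p \<in> I. fst p + snd p = s} * card (core_words (s mod 3) (N - s) M))"
proof -
  let ?I = "{p \<in> I. fst p + snd p \<le> N}"
  let ?h = "\<lambda>p. card (core_words ((fst p + snd p) mod 3) (N - (fst p + snd p)) M)"
  have "finite ?I"
    by (rule finite_subset[of _ "{..N} \<times> {..N}"]) auto
  then have "(\<Sum>p\<in>?I. ?h p) = (\<Sum>s\<le>N. \<Sum>p\<in>{p \<in> ?I. fst p + snd p = s}. ?h p)"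
    by (intro sum.group[symmetric]) auto
  also have "\<dots> = (\<Sum>s\<le>N. card {p \<in> I. fst p + snd p = s} * card (core_words (s mod 3) (N - s) M))"
  proof (rule sum.cong)
    fix s
    assume "s \<in> {..N}"
    then have "{p \<in> ?I. fst p + snd p = s} = {p \<in> I. fst p + snd p = s}"
      by auto
    then show "(\<Sum>p\<in>{p \<in> ?I. fst p + snd p = s}. ?h p) =
      card {p \<in> I. fst p + snd p = s} * card (core_words (s mod 3) (N - s) M)"
      by simp
  qed simp
  finally show ?thesis
    by (simp add: card_block_words_pairs)
qed

lemma card_single_block_words:
  "card (W_words (block_form {(a, b)}) N M) =
     (if a + b \<le> N then card (core_words ((a + b) mod 3) (N - (a + b)) M) else 0)"
proof -
  have "card {p \<in> {(a, b)}. fst p + snd p = s} = (if s = a + b then 1 else 0)" for s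
  proof -
    have "{p \<in> {(a, b)}. fst p + snd p = s} = (if s = a + b then {(a, b)} else {})"
      by auto
    then show ?thesis
      by simp
  qed
  then have "card (W_words (block_form {(a, b)}) N M) =
      (\<Sum>s\<le>N. if s = a + b then card (core_words (s mod 3) (N - s) M) else 0)"
    unfolding card_block_words by (intro sum.cong) auto
  then show ?thesis
    by (simp add: sum.delta)
qed


lemma card_pairs_sum_filter:
  fixes Q :: "nat \<Rightarrow> nat \<Rightarrow> bool"
  shows "card {p \<in> {(a, b). Q a b \<and> P (a + b)}. fst p + snd p = s} =
     (if P s then card {(a, b). Q a b \<and> a + b = s} else 0)"
proof -
  have "{p \<in> {(a, b). Q a b \<and> P (a + b)}. fst p + snd p = s} =
      (if P s then {(a, b). Q a b \<and> a + b = s} else {})"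
    by auto
  then show ?thesis
    by simp
qed

lemma card_pos_pairs_sum: "card {(a, b). 0 < a \<and> 0 < b \<and> a + b = s} = s - 1" for s :: nat
proof -
  have "{(a, b). 0 < a \<and> 0 < b \<and> a + b = s} = (\<lambda>a. (a, s - a)) ` {1..<s}"
    by (auto simp: image_iff)
  moreover have "inj_on (\<lambda>a. (a, s - a)) {1..<s}"
    by (rule inj_onI) simp
  ultimately show ?thesis
    by (simp add: card_image)
qed

lemma card_axis_pairs_sum:
  "card {(a, b). (a = 0 \<or> b = 0) \<and> a + b = s} = (if s = 0 then 1 else (2::nat))" for s :: nat
proof -
  have "{(a, b). (a = 0 \<or> b = 0) \<and> a + b = s} = {(s, 0), (0, s)}"
    by auto
  then show ?thesis
    by simp
qed

lemma sum_atMost_mod3: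
  fixes f :: "nat \<Rightarrow> 'a::comm_monoid_add"
  assumes "r < 3"
  shows "(\<Sum>s\<le>3 * n. if s mod 3 = r then f s else 0) =
    (\<Sum>k\<le>n. if 3 * k + r \<le> 3 * n then f (3 * k + r) else 0)"
proof -
  have "{s \<in> {..3 * n}. s mod 3 = r} = (\<lambda>k. 3 * k + r) ` {k \<in> {..n}. 3 * k + r \<le> 3 * n}"
  proof (intro equalityI subsetI)
    fix s
    assume "s \<in> {s \<in> {..3 * n}. s mod 3 = r}"
    then have "s = 3 * (s div 3) + r" "s \<le> 3 * n"
      by auto
    then show "s \<in> (\<lambda>k. 3 * k + r) ` {k \<in> {..n}. 3 * k + r \<le> 3 * n}"
      by (intro image_eqI[of _ _ "s div 3"]) auto
  qed (use assms in auto)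
  moreover have "inj_on (\<lambda>k. 3 * k + r) {k \<in> {..n}. 3 * k + r \<le> 3 * n}"
    by (rule inj_onI) simp
  ultimately show ?thesis
    by (simp add: sum.inter_filter[symmetric] sum.reindex)
qed

lemma sum_atMost_eq_atLeast_1:
  fixes f :: "nat \<Rightarrow> 'a::comm_monoid_add"
  assumes "f 0 = 0"
  shows "(\<Sum>k\<le>n. f k) = (\<Sum>k\<in>{1..n}. f k)"
proof -
  have "{..n} = insert 0 {1..n}"
    by auto
  then show ?thesis
    using assms by simp
qed

lemma card_block_words_residue:
  assumes pairs: "\<And>s. card {p \<in> I. fst p + snd p = s} = (if s mod 3 = r then c s else 0)"
    and "r < 3"
  shows "card (W_words (block_form I) (3 * n) M) =
    (\<Sum>k\<le>n. if 3 * k + r \<le> 3 * n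
      then c (3 * k + r) * card (core_words r (3 * n - (3 * k + r)) M) else 0)"
proof -
  have "card (W_words (block_form I) (3 * n) M) =
      (\<Sum>s\<le>3 * n. if s mod 3 = r then c s * card (core_words r (3 * n - s) M) else 0)"
    unfolding card_block_words pairs by (rule sum.cong) auto
  then show ?thesis
    using sum_atMost_mod3[OF \<open>r < 3\<close>] by simp
qed


section \<open>The shapes as block forms\<close>

lemma block_form_pos_exponents:
  "block_form {(a, b). (0 < a \<and> 0 < b) \<and> P (a + b)} w \<longleftrightarrow>
     (\<exists>B \<alpha> \<beta>. B \<noteq> [] \<and> \<alpha> > 0 \<and> \<beta> > 0 \<and> P (\<alpha> + \<beta>) \<and> w = Uexp \<alpha> @ [S] @ B @ [S] @ Uexp \<beta>)"
  by (auto simp: block_form_def block_def)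

lemma block_form_one_sided:
  "block_form {(a, b). (a = 0 \<or> b = 0) \<and> P (a + b)} w \<longleftrightarrow>
     (\<exists>B \<alpha>. B \<noteq> [] \<and> P \<alpha> \<and> (w = [S] @ B @ [S] @ Uexp \<alpha> \<or> w = Uexp \<alpha> @ [S] @ B @ [S]))"
proof
  assume "block_form {(a, b). (a = 0 \<or> b = 0) \<and> P (a + b)} w"
  then obtain a b B where "a = 0 \<or> b = 0" "P (a + b)" "B \<noteq> []" "w = block a B b"
    by (auto simp: block_form_def)
  then show "\<exists>B \<alpha>. B \<noteq> [] \<and> P \<alpha> \<and> (w = [S] @ B @ [S] @ Uexp \<alpha> \<or> w = Uexp \<alpha> @ [S] @ B @ [S])"
    by (elim disjE; intro exI[of _ B] exI[of _ "a + b"]) (simp_all add: block_def)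
next
  assume "\<exists>B \<alpha>. B \<noteq> [] \<and> P \<alpha> \<and> (w = [S] @ B @ [S] @ Uexp \<alpha> \<or> w = Uexp \<alpha> @ [S] @ B @ [S])"
  then obtain B \<alpha> where "B \<noteq> []" "P \<alpha>" "w = block 0 B \<alpha> \<or> w = block \<alpha> B 0"
    by (auto simp: block_def)
  then show "block_form {(a, b). (a = 0 \<or> b = 0) \<and> P (a + b)} w"
    unfolding block_form_def by force
qed

lemma form_d_eq: "form_d = block_form {(a, b). (0 < a \<and> 0 < b) \<and> (a + b) mod 3 = 2}"
  unfolding fun_eq_iff form_d_def block_form_pos_exponents[where P = "\<lambda>s. s mod 3 = 2"] by simp

lemma form_e_eq: "form_e = block_form {(a, b). (0 < a \<and> 0 < b) \<and> (a + b) mod 3 = 1}"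
  unfolding fun_eq_iff form_e_def block_form_pos_exponents[where P = "\<lambda>s. s mod 3 = 1"] by simp

lemma form_c_eq: "form_c = block_form {(a, b). (a = 0 \<or> b = 0) \<and> (0 < a + b \<and> (a + b) mod 3 = 0)}"
  unfolding fun_eq_iff form_c_def block_form_one_sided[where P = "\<lambda>s. 0 < s \<and> s mod 3 = 0"]
  by (simp add: conj_assoc disj_commute)

lemma form_f_eq: "form_f = block_form {(a, b). (a = 0 \<or> b = 0) \<and> (a + b) mod 3 = 1}"
  unfolding fun_eq_iff form_f_def block_form_one_sided[where P = "\<lambda>s. s mod 3 = 1"] by simp

lemma form_g_eq: "form_g = block_form {(a, b). (a = 0 \<or> b = 0) \<and> (a + b) mod 3 = 2}"
  unfolding fun_eq_iff form_g_def block_form_one_sided[where P = "\<lambda>s. s mod 3 = 2"] by simp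

lemma form_dfrak_eq: "form_dfrak = block_form {(1, 1)}"
  by (auto simp: fun_eq_iff form_dfrak_def block_form_def block_def Uexp_def)

lemma form_ffrak_eq: "form_ffrak = block_form {(0, 1)}"
  by (auto simp: fun_eq_iff form_ffrak_def block_form_def block_def Uexp_def)

lemma form_b_iff:
  "form_b w \<longleftrightarrow> block_form {(a, b). (0 < a \<and> 0 < b) \<and> (a + b) mod 3 = 0} w
    \<or> (\<exists>\<gamma>>0. \<gamma> mod 3 = 0 \<and> w = Uexp \<gamma>)"
  unfolding form_b_def block_form_pos_exponents[where P = "\<lambda>s. s mod 3 = 0"] ..

lemma form_a_iff_block_form:
  assumes "no_SS w" and "count_list w U mod 3 = 0"
  shows "form_a w \<longleftrightarrow> block_form {(0, 0)} w"
proof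
  assume "form_a w"
  then obtain B where "w = block 0 (U # B @ [U]) 0"
    by (auto simp: form_a_def block_def)
  then show "block_form {(0, 0)} w"
    by (simp add: block_form_block)
next
  assume "block_form {(0, 0)} w"
  then obtain B where B: "B \<noteq> []" "w = [S] @ B @ [S]"
    by (auto simp: block_form_def block_def)
  with assms have "hd B = U" "last B = U" "count_list B U mod 3 = 0"
    by (simp_all add: no_SS_S_block)
  moreover obtain x C where "B = x # C"
    using \<open>B \<noteq> []\<close> by (cases B) auto
  ultimately obtain D where D: "B = U # D @ [U]"
    by (cases C rule: rev_cases) auto
  moreover have "D \<noteq> []"
    using D \<open>count_list B U mod 3 = 0\<close> by auto presburger
  ultimately show "form_a w"
    using B by (auto simp: form_a_def)
qed

lemma form_b_d_e_iff:
  "form_b v \<or> form_d v \<or> form_e v \<longleftrightarrow>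
     block_form {(a, b). 0 < a \<and> 0 < b} v \<or> (\<exists>\<gamma>>0. \<gamma> mod 3 = 0 \<and> v = Uexp \<gamma>)"
proof -
  have "{(a, b). 0 < a \<and> 0 < b} = {(a, b). (0 < a \<and> 0 < b) \<and> (a + b) mod 3 = 0}
      \<union> {(a, b). (0 < a \<and> 0 < b) \<and> (a + b) mod 3 = 2}
      \<union> {(a, b::nat). (0 < a \<and> 0 < b) \<and> (a + b) mod 3 = 1}"
    by auto
  then show ?thesis
    by (auto simp: form_b_iff form_d_eq form_e_eq block_form_Un)
qed

lemma form_b_d_e_disjoint:
  "\<not> (form_b v \<and> form_d v)" "\<not> (form_b v \<and> form_e v)" "\<not> (form_d v \<and> form_e v)"
proof -
  let ?I = "\<lambda>r. {(a, b). (0 < a \<and> 0 < b) \<and> (a + b) mod 3 = r}"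
  have disj: "\<not> (block_form (?I r) v \<and> block_form (?I r') v)" if "r \<noteq> r'" for r r'
    using block_form_disjoint[of "?I r" v "?I r'"] that
    by (auto simp: block_form_def dest: block_inj)
  have "\<not> (block_form I v \<and> v = Uexp \<gamma>)" for I \<gamma>
    using S_in_set_if_block_form by fastforce
  then show "\<not> (form_b v \<and> form_d v)" "\<not> (form_b v \<and> form_e v)" "\<not> (form_d v \<and> form_e v)"
    unfolding form_b_iff form_d_eq form_e_eq using disj[of 0 2] disj[of 0 1] disj[of 2 1] by auto
qed

lemma U_bordered_if_form_b_d_e:
  assumes "form_b v \<or> form_d v \<or> form_e v"
  shows "\<exists>B. B \<noteq> [] \<and> v = U # B @ [U]"
  using assms unfolding form_b_d_e_iff
proof (elim disjE exE conjE)
  assume "block_form {(a, b). 0 < a \<and> 0 < b} v"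
  then obtain a b B where "v = block (Suc a) B (Suc b)"
    by (auto simp: block_form_def gr0_conv_Suc)
  then have "v = U # (Uexp a @ [S] @ B @ [S] @ Uexp b) @ [U]"
    by (simp add: block_def Uexp_def replicate_append_same)
  then show ?thesis
    by blast
next
  fix \<gamma>
  assume "0 < \<gamma>" "\<gamma> mod 3 = 0" "v = Uexp \<gamma>"
  then have "3 \<le> \<gamma>"
    by presburger
  then have "Suc (Suc (Suc (\<gamma> - 3))) = \<gamma>"
    by arith
  then have "v = Uexp (Suc (Suc (Suc (\<gamma> - 3))))"
    using \<open>v = Uexp \<gamma>\<close> by simp
  then have "v = U # Uexp (Suc (\<gamma> - 3)) @ [U]"
    by (simp add: Uexp_def replicate_append_same)
  then show ?thesis
    by (auto simp: Uexp_def)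
qed

lemma form_b_d_e_if_U_bordered:
  assumes "no_SS v" and "count_list v S \<noteq> 1" and "count_list v U mod 3 = 0" and "v = U # C @ [U]"
  shows "form_b v \<or> form_d v \<or> form_e v"
proof (cases "S \<in> set v")
  case False
  define \<gamma> where "\<gamma> = count_list v U"
  have "v = Uexp \<gamma>"
    using eq_Uexp_length[of v] False by (simp add: \<gamma>_def length_eq_count_list_U_S count_list_0_iff)
  moreover have "0 < \<gamma>" "\<gamma> mod 3 = 0"
    using assms(3,4) by (simp_all add: \<gamma>_def)
  ultimately show ?thesis
    unfolding form_b_d_e_iff by (intro disjI2 exI[of _ \<gamma>]) simp
next
  case True
  then obtain xs ys where v: "v = xs @ S # ys" and "S \<notin> set xs"
    by (blast dest: split_list_first)
  then have "S \<in> set ys"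
    using assms(2) by (auto simp: count_list_0_iff)
  then obtain B zs where ys: "ys = B @ S # zs" and "S \<notin> set zs"
    by (blast dest: split_list_last)
  obtain a b where ab: "xs = Uexp a" "zs = Uexp b"
    using eq_Uexp_length \<open>S \<notin> set xs\<close> \<open>S \<notin> set zs\<close> by blast
  have "xs \<noteq> []" "zs \<noteq> []"
    using assms(4) v ys by (auto simp: Cons_eq_append_conv append_eq_Cons_conv)
  moreover have "B \<noteq> []"
  proof
    assume "B = []"
    then have "v = xs @ [S, S] @ zs"
      using v ys by simp
    then show False
      using assms(1) no_SS_iff by blast
  qed
  moreover have "v = block a B b"
    using v ys ab by (simp add: block_def)
  ultimately show ?thesis
    unfolding form_b_d_e_iff using ab by (auto simp: block_form_block)
qed


lemma card_form_a_words: "N mod 3 = 0 \<Longrightarrow> card (W_words form_a N M) = card (core_words 0 N M)"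
proof -
  assume "N mod 3 = 0"
  then have "W_words form_a N M = W_words (block_form {(0, 0)}) N M"
    by (auto simp: W_words_def Wset_iff form_a_iff_block_form)
  then show ?thesis
    by (simp add: card_single_block_words)
qed

lemma card_form_b_words:
  assumes "M \<noteq> 0"
  shows "card (W_words form_b (3 * n) M) =
    (\<Sum>k\<in>{1..n}. (3 * k - 1) * card (W_words form_a (3 * (n - k)) M))"
proof -
  have "W_words form_b (3 * n) M =
      W_words (block_form {(a, b). (0 < a \<and> 0 < b) \<and> (a + b) mod 3 = 0}) (3 * n) M"
    using assms by (auto simp: W_words_def form_b_iff)
  moreover have "card {p \<in> {(a, b). (0 < a \<and> 0 < b) \<and> (a + b) mod 3 = 0}. fst p + snd p = s} =
      (if s mod 3 = 0 then s - 1 else 0)" for s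
    unfolding card_pairs_sum_filter[where Q = "\<lambda>a b. 0 < a \<and> 0 < b" and P = "\<lambda>s. s mod 3 = 0"]
    by (simp add: card_pos_pairs_sum)
  ultimately have "card (W_words form_b (3 * n) M) =
      (\<Sum>k\<le>n. if 3 * k + 0 \<le> 3 * n
        then (3 * k + 0 - 1) * card (core_words 0 (3 * n - (3 * k + 0)) M) else 0)"
    by (simp only:) (rule card_block_words_residue, simp_all)
  also have "\<dots> = (\<Sum>k\<in>{1..n}. (3 * k - 1) * card (core_words 0 (3 * n - 3 * k) M))"
    by (subst sum_atMost_eq_atLeast_1) (auto intro!: sum.cong)
  also have "\<dots> = (\<Sum>k\<in>{1..n}. (3 * k - 1) * card (W_words form_a (3 * (n - k)) M))"
    by (intro sum.cong) (auto simp: card_form_a_words diff_mult_distrib2)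
  finally show ?thesis .
qed

lemma card_form_b_words_0: "0 < n \<Longrightarrow> card (W_words form_b (3 * n) 0) = 1"
proof -
  assume "0 < n"
  have "W_words form_b (3 * n) 0 = {Uexp (3 * n)}"
  proof (intro equalityI subsetI)
    fix w
    assume "w \<in> W_words form_b (3 * n) 0"
    then have "S \<notin> set w" "length w = 3 * n"
      by (auto simp: W_words_def length_eq_count_list_U_S count_list_0_iff)
    then show "w \<in> {Uexp (3 * n)}"
      using eq_Uexp_length by fastforce
  next
    fix w
    assume "w \<in> {Uexp (3 * n)}"
    moreover have "trivial_in_Gamma (Uexp (3 * n))"
      using trivial_in_Gamma_append_U3[of "[]" n] by (simp add: trivial_in_Gamma_def mat_id_def)
    moreover have "no_SS (Uexp (3 * n))"
      using no_SS_Uexp_append[of "3 * n" "[]"] by simp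
    moreover have "Uexp (3 * n) \<noteq> []"
      using \<open>0 < n\<close> by (simp add: Uexp_def)
    moreover have "form_b (Uexp (3 * n))"
      unfolding form_b_def using \<open>0 < n\<close> by (intro disjI2 exI[of _ "3 * n"]) simp
    ultimately show "w \<in> W_words form_b (3 * n) 0"
      by (simp add: W_words_def Wset_iff)
  qed
  then show ?thesis
    by simp
qed

lemma card_form_c_words:
  "card (W_words form_c (3 * n) M) = 2 * (\<Sum>k\<in>{1..n}. card (W_words form_a (3 * (n - k)) M))"
proof -
  have "card {p \<in> {(a, b). (a = 0 \<or> b = 0) \<and> (0 < a + b \<and> (a + b) mod 3 = 0)}. fst p + snd p = s} =
      (if s mod 3 = 0 then (if s = 0 then 0 else 2) else 0)" for s :: nat
    unfolding card_pairs_sum_filter[where Q = "\<lambda>a b. a = 0 \<or> b = 0"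
        and P = "\<lambda>s. 0 < s \<and> s mod 3 = 0"]
    by (simp add: card_axis_pairs_sum)
  then have "card (W_words form_c (3 * n) M) =
      (\<Sum>k\<le>n. if 3 * k + 0 \<le> 3 * n
        then (if 3 * k + 0 = 0 then 0 else 2) * card (core_words 0 (3 * n - (3 * k + 0)) M) else 0)"
    unfolding form_c_eq by (rule card_block_words_residue) simp
  also have "\<dots> = (\<Sum>k\<in>{1..n}. 2 * card (core_words 0 (3 * n - 3 * k) M))"
    by (subst sum_atMost_eq_atLeast_1) (auto intro!: sum.cong)
  also have "\<dots> = 2 * (\<Sum>k\<in>{1..n}. card (W_words form_a (3 * (n - k)) M))"
    unfolding sum_distrib_left by (intro sum.cong) (auto simp: card_form_a_words diff_mult_distrib2)
  finally show ?thesis .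
qed

lemma card_form_d_words:
  "card (W_words form_d (3 * n) M) =
    (\<Sum>k\<in>{0..n}. (3 * k + 1) * card (W_words form_dfrak (3 * (n - k)) M))"
proof -
  have "card {p \<in> {(a, b). (0 < a \<and> 0 < b) \<and> (a + b) mod 3 = 2}. fst p + snd p = s} =
      (if s mod 3 = 2 then s - 1 else 0)" for s
    unfolding card_pairs_sum_filter[where Q = "\<lambda>a b. 0 < a \<and> 0 < b" and P = "\<lambda>s. s mod 3 = 2"]
    by (simp add: card_pos_pairs_sum)
  then have "card (W_words form_d (3 * n) M) =
      (\<Sum>k\<le>n. if 3 * k + 2 \<le> 3 * n
        then (3 * k + 2 - 1) * card (core_words 2 (3 * n - (3 * k + 2)) M) else 0)"
    unfolding form_d_eq by (rule card_block_words_residue) simp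
  also have "\<dots> = (\<Sum>k\<in>{0..n}. (3 * k + 1) * card (W_words form_dfrak (3 * (n - k)) M))"
    unfolding form_dfrak_eq card_single_block_words atLeast0AtMost
    by (intro sum.cong) (auto simp: diff_mult_distrib2 numeral_2_eq_2)
  finally show ?thesis .
qed

lemma card_form_e_words:
  "card (W_words form_e (3 * n) M) = (\<Sum>k\<in>{1..n}. 3 * k * card (W_words form_ffrak (3 * (n - k)) M))"
proof -
  have "card {p \<in> {(a, b). (0 < a \<and> 0 < b) \<and> (a + b) mod 3 = 1}. fst p + snd p = s} =
      (if s mod 3 = 1 then s - 1 else 0)" for s
    unfolding card_pairs_sum_filter[where Q = "\<lambda>a b. 0 < a \<and> 0 < b" and P = "\<lambda>s. s mod 3 = 1"]
    by (simp add: card_pos_pairs_sum)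
  then have "card (W_words form_e (3 * n) M) =
      (\<Sum>k\<le>n. if 3 * k + 1 \<le> 3 * n
        then (3 * k + 1 - 1) * card (core_words 1 (3 * n - (3 * k + 1)) M) else 0)"
    unfolding form_e_eq by (rule card_block_words_residue) simp
  also have "\<dots> = (\<Sum>k\<in>{1..n}. if 3 * k + 1 \<le> 3 * n
      then 3 * k * card (core_words 1 (3 * n - (3 * k + 1)) M) else 0)"
    by (subst sum_atMost_eq_atLeast_1) (auto intro!: sum.cong)
  also have "\<dots> = (\<Sum>k\<in>{1..n}. 3 * k * card (W_words form_ffrak (3 * (n - k)) M))"
    unfolding form_ffrak_eq card_single_block_words
    by (intro sum.cong) (auto simp: diff_mult_distrib2)
  finally show ?thesis .
qed

lemma card_form_f_words:
  "card (W_words form_f (3 * n) M) = 2 * (\<Sum>k\<in>{0..n}. card (W_words form_ffrak (3 * (n - k)) M))"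
proof -
  have "card {p \<in> {(a, b). (a = 0 \<or> b = 0) \<and> (a + b) mod 3 = 1}. fst p + snd p = s} =
      (if s mod 3 = 1 then 2 else 0)" for s :: nat
    unfolding card_pairs_sum_filter[where Q = "\<lambda>a b. a = 0 \<or> b = 0" and P = "\<lambda>s. s mod 3 = 1"]
    by (simp add: card_axis_pairs_sum)
  then have "card (W_words form_f (3 * n) M) =
      (\<Sum>k\<le>n. if 3 * k + 1 \<le> 3 * n then 2 * card (core_words 1 (3 * n - (3 * k + 1)) M) else 0)"
    unfolding form_f_eq by (rule card_block_words_residue) simp
  also have "\<dots> = 2 * (\<Sum>k\<in>{0..n}. card (W_words form_ffrak (3 * (n - k)) M))"
    unfolding form_ffrak_eq card_single_block_words sum_distrib_left atLeast0AtMost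
    by (intro sum.cong) (auto simp: diff_mult_distrib2)
  finally show ?thesis .
qed

lemma card_form_g_words:
  "card (W_words form_g (3 * n) M) = 2 * (\<Sum>k\<in>{0..n}. card (W_words form_dfrak (3 * (n - k)) M))"
proof -
  have "card {p \<in> {(a, b). (a = 0 \<or> b = 0) \<and> (a + b) mod 3 = 2}. fst p + snd p = s} =
      (if s mod 3 = 2 then 2 else 0)" for s :: nat
    unfolding card_pairs_sum_filter[where Q = "\<lambda>a b. a = 0 \<or> b = 0" and P = "\<lambda>s. s mod 3 = 2"]
    by (simp add: card_axis_pairs_sum)
  then have "card (W_words form_g (3 * n) M) =
      (\<Sum>k\<le>n. if 3 * k + 2 \<le> 3 * n then 2 * card (core_words 2 (3 * n - (3 * k + 2)) M) else 0)"
    unfolding form_g_eq by (rule card_block_words_residue) simp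
  also have "\<dots> = 2 * (\<Sum>k\<in>{0..n}. card (W_words form_dfrak (3 * (n - k)) M))"
    unfolding form_dfrak_eq card_single_block_words sum_distrib_left atLeast0AtMost
    by (intro sum.cong) (auto simp: diff_mult_distrib2 numeral_2_eq_2)
  finally show ?thesis .
qed

lemma W_words_form_a_eq_image:
  assumes "N mod 3 = 0" and "even M"
  shows "W_words form_a N (M + 2) =
    (\<lambda>v. S # v @ [S]) ` W_words (\<lambda>v. form_b v \<or> form_d v \<or> form_e v) N M"
proof (intro equalityI subsetI)
  fix w
  assume w: "w \<in> W_words form_a N (M + 2)"
  then obtain C where C: "C \<noteq> []" "w = S # (U # C @ [U]) @ [S]"
    by (auto simp: W_words_def form_a_def)
  let ?v = "U # C @ [U]"
  have "no_SS (S # ?v @ [S])" "trivial_in_Gamma (S # ?v @ [S])"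
    using w C by (simp_all add: W_words_def Wset_iff)
  then have "?v \<in> Wset"
    by (simp only: Wset_iff no_SS_S_block trivial_in_Gamma_S_conj) simp
  moreover have "count_list ?v U = N" "count_list ?v S = M"
    using w C by (auto simp: W_words_def)
  moreover have "form_b ?v \<or> form_d ?v \<or> form_e ?v"
    using calculation assms by (intro form_b_d_e_if_U_bordered) (auto simp: Wset_iff)
  ultimately show "w \<in> (\<lambda>v. S # v @ [S]) ` W_words (\<lambda>v. form_b v \<or> form_d v \<or> form_e v) N M"
    using C by (auto simp: W_words_def)
next
  fix w
  assume "w \<in> (\<lambda>v. S # v @ [S]) ` W_words (\<lambda>v. form_b v \<or> form_d v \<or> form_e v) N M"
  then obtain v where v: "v \<in> W_words (\<lambda>v. form_b v \<or> form_d v \<or> form_e v) N M" "w = S # v @ [S]"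
    by blast
  then obtain C where C: "C \<noteq> []" "v = U # C @ [U]"
    using U_bordered_if_form_b_d_e by (auto simp: W_words_def)
  have "no_SS v" "trivial_in_Gamma v"
    using v(1) by (auto simp: W_words_def Wset_iff)
  then have "no_SS (S # v @ [S])" "trivial_in_Gamma (S # v @ [S])"
    using C(2) by (simp_all only: no_SS_S_block trivial_in_Gamma_S_conj) auto
  then show "w \<in> W_words form_a N (M + 2)"
    using v C by (auto simp: W_words_def Wset_iff form_a_def)
qed

lemma card_form_a_words_Suc_Suc:
  assumes "N mod 3 = 0" and "even M"
  shows "card (W_words form_a N (M + 2)) =
    card (W_words form_b N M) + card (W_words form_d N M) + card (W_words form_e N M)"
proof -
  have "W_words (\<lambda>v. form_b v \<or> form_d v \<or> form_e v) N M =
      (W_words form_b N M \<union> W_words form_d N M) \<union> W_words form_e N M"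
    by (auto simp: W_words_def)
  moreover have "W_words form_b N M \<inter> W_words form_d N M = {}"
    "(W_words form_b N M \<union> W_words form_d N M) \<inter> W_words form_e N M = {}"
    using form_b_d_e_disjoint by (auto simp: W_words_def)
  moreover have "inj (\<lambda>v. S # v @ [S])"
    by (rule injI) simp
  ultimately show ?thesis
    unfolding W_words_form_a_eq_image[OF assms]
    by (simp add: card_image inj_on_subset card_Un_disjoint finite_W_words)
qed

lemma cnt_eq_card_W_words: "cnt P (int n) (int m) = card (W_words P n m)"
  by (simp add: cnt_def W_words_def)

lemma cnt_eq_card_W_words_mult:
  "cnt P (3 * int n) (2 * int m) = card (W_words P (3 * n) (2 * m))"
  using cnt_eq_card_W_words[of P "3 * n" "2 * m"] by simp

lemma cnt_eq_card_W_words_diff: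
  "k \<le> n \<Longrightarrow> cnt P (3 * int n - 3 * int k) (2 * int m) = card (W_words P (3 * (n - k)) (2 * m))"
  using cnt_eq_card_W_words[of P "3 * (n - k)" "2 * m"] by (simp add: of_nat_diff)

lemma cnt_eq_card_W_words_minus_2:
  "cnt P (3 * int n) (2 * int m - 2) =
    (if m = 0 then 0 else card (W_words P (3 * n) (2 * (m - 1))))"
  using cnt_eq_card_W_words[of P "3 * n" "2 * (m - 1)"] by (auto simp: cnt_def of_nat_diff)

theorem proposition3:
  fixes n m :: nat
  shows
   "ca (3*int n) (2*int m) = cb (3*int n) (2*int m - 2) + cd (3*int n) (2*int m - 2)
                              + ce (3*int n) (2*int m - 2)
  \<and> (m \<ge> 1 \<longrightarrow> cb (3*int n) (2*int m) = (\<Sum>k\<in>{1..n}. (3*k - 1) * ca (3*int n - 3*int k) (2*int m)))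
  \<and> (n > 0 \<longrightarrow> cb (3*int n) 0 = 1)
  \<and> cc (3*int n) (2*int m) = 2 * (\<Sum>k\<in>{1..n}. ca (3*int n - 3*int k) (2*int m))
  \<and> cd (3*int n) (2*int m) = (\<Sum>k\<in>{0..n}. (3*k + 1) * cdfrak (3*int n - 3*int k) (2*int m))
  \<and> ce (3*int n) (2*int m) = (\<Sum>k\<in>{1..n}. 3*k * cffrak (3*int n - 3*int k) (2*int m))
  \<and> cf (3*int n) (2*int m) = 2 * (\<Sum>k\<in>{0..n}. cffrak (3*int n - 3*int k) (2*int m))
  \<and> cg (3*int n) (2*int m) = 2 * (\<Sum>k\<in>{0..n}. cdfrak (3*int n - 3*int k) (2*int m))"
proof (intro conjI impI)
  have "W_words form_a (3 * n) 0 = {}"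
    by (auto simp: W_words_def form_a_def)
  moreover have "card (W_words form_a (3 * n) (2 * (m - 1) + 2)) =
      card (W_words form_b (3 * n) (2 * (m - 1)))
      + card (W_words form_d (3 * n) (2 * (m - 1))) + card (W_words form_e (3 * n) (2 * (m - 1)))"
    by (rule card_form_a_words_Suc_Suc) simp_all
  ultimately show "ca (3*int n) (2*int m) = cb (3*int n) (2*int m - 2) + cd (3*int n) (2*int m - 2)
      + ce (3*int n) (2*int m - 2)"
    unfolding ca_def cb_def cd_def ce_def cnt_eq_card_W_words_minus_2 cnt_eq_card_W_words_mult
    by (cases m) simp_all
  show "n > 0 \<Longrightarrow> cb (3*int n) 0 = 1"
    using cnt_eq_card_W_words_mult[of form_b n 0] by (simp add: cb_def card_form_b_words_0)
qed (simp_all add: ca_def cb_def cc_def cd_def ce_def cf_def cg_def cdfrak_def cffrak_def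
    cnt_eq_card_W_words_mult cnt_eq_card_W_words_diff card_form_b_words card_form_c_words
    card_form_d_words card_form_e_words card_form_f_words card_form_g_words)

end
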